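(* Let $N\ge 4$ be even and let $P_1,\dots,P_N$ be an $N$-periodic billiard trajectory in $E$. For $j=1,2$ let $\bar Q_{j,i}$ be the foot of the perpendicular from $f_j$ to the line $P_iP_{i+1}$, and let $\bar A_j$ be the signed area of the polygon $\bar Q_{j,1},\dots,\bar Q_{j,N}$. Then $\bar A_1=\bar A_2$, i.e. $\bar A_1/\bar A_2=1$.
   Context: Let $E$ be the ellipse $x^2/a^2+y^2/b^2=1$ with $a>b>0$, center $O=(0,0)$ and foci $f_1=(-\sqrt{a^2-b^2},0)$, $f_2=(\sqrt{a^2-b^2},0)$. An $N$-periodic billiard trajectory is a convex polygon with vertices $P_1,\dots,P_N\in E$ (indices mod $N$), listed counterclockwise and winding once around $O$, with $P_i\neq P_{i+1}$, such that at every vertex $P_i$ the normal line to $E$ at $P_i$ bisects the angle $\angle P_{i-1}P_iP_{i+1}$, and all of whose sides are tangent to a common ellipse confocal with $E$. The signed area of a polygon with vertices $W_i=(x_i,y_i)$, $i=1,\dots,N$ (indices mod $N$), is $S=\tfrac12\sum_{i=1}^N (x_iy_{i+1}-x_{i+1}y_i)$. *)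

theory Defs
  imports "HOL-Analysis.Analysis"
begin

type_synonym pt = "real \<times> real"

definition cross :: "pt \<Rightarrow> pt \<Rightarrow> real" where
  "cross u v = fst u * snd v - snd u * fst v"

definition pdot :: "pt \<Rightarrow> pt \<Rightarrow> real" where
  "pdot u v = fst u * fst v + snd u * snd v"

definition pnorm :: "pt \<Rightarrow> real" where
  "pnorm u = sqrt (pdot u u)"

definition on_ellipse :: "real \<Rightarrow> real \<Rightarrow> pt \<Rightarrow> bool" where
  "on_ellipse a b X \<longleftrightarrow> (fst X)\<^sup>2 / a\<^sup>2 + (snd X)\<^sup>2 / b\<^sup>2 = 1"

definition focus1 :: "real \<Rightarrow> real \<Rightarrow> pt" where
  "focus1 a b = (- sqrt (a\<^sup>2 - b\<^sup>2), 0)"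
definition focus2 :: "real \<Rightarrow> real \<Rightarrow> pt" where
  "focus2 a b = (sqrt (a\<^sup>2 - b\<^sup>2), 0)"

definition ell_normal :: "real \<Rightarrow> real \<Rightarrow> pt \<Rightarrow> pt" where
  "ell_normal a b X = (fst X / a\<^sup>2, snd X / b\<^sup>2)"

definition line_tangent_to_ellipse :: "pt \<Rightarrow> pt \<Rightarrow> real \<Rightarrow> real \<Rightarrow> bool" where
  "line_tangent_to_ellipse P Q A B \<longleftrightarrow>
     (\<exists>!X. on_ellipse A B X \<and> (\<exists>t::real. X = P + t *\<^sub>R (Q - P)))"

definition confocal_ellipse :: "real \<Rightarrow> real \<Rightarrow> real \<Rightarrow> real \<Rightarrow> bool" where
  "confocal_ellipse a b A B \<longleftrightarrow> A > B \<and> B > 0 \<and> A\<^sup>2 - B\<^sup>2 = a\<^sup>2 - b\<^sup>2"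

definition billiard_traj :: "real \<Rightarrow> real \<Rightarrow> nat \<Rightarrow> (nat \<Rightarrow> pt) \<Rightarrow> bool" where
  "billiard_traj a b N P \<longleftrightarrow>
     N \<ge> 3 \<and>
     (\<forall>i<N. on_ellipse a b (P i)) \<and>
     (\<forall>i<N. P i \<noteq> P (Suc i mod N)) \<and>
     \<comment> \<open>convex polygon, listed counterclockwise: every other vertex strictly left of each edge\<close>
     (\<forall>i<N. \<forall>j<N. j \<noteq> i \<and> j \<noteq> Suc i mod N \<longrightarrow>
         cross (P (Suc i mod N) - P i) (P j - P i) > 0) \<and>
     \<comment> \<open>winds once around O: O strictly left of each edge\<close>
     (\<forall>i<N. cross (P (Suc i mod N) - P i) (0 - P i) > 0) \<and>
     \<comment> \<open>reflection law: the normal at P i bisects the angle P(i-1) P i P(i+1)\<close>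
     (\<forall>i<N. let u = P ((i + N - 1) mod N) - P i; v = P (Suc i mod N) - P i in
         cross (ell_normal a b (P i)) ((1 / pnorm u) *\<^sub>R u + (1 / pnorm v) *\<^sub>R v) = 0) \<and>
     \<comment> \<open>all sides tangent to a common confocal ellipse\<close>
     (\<exists>A B. confocal_ellipse a b A B \<and>
         (\<forall>i<N. line_tangent_to_ellipse (P i) (P (Suc i mod N)) A B))"

definition foot :: "pt \<Rightarrow> pt \<Rightarrow> pt \<Rightarrow> pt" where
  "foot F P Q = P + (pdot (F - P) (Q - P) / pdot (Q - P) (Q - P)) *\<^sub>R (Q - P)"

definition signed_area :: "nat \<Rightarrow> (nat \<Rightarrow> pt) \<Rightarrow> real" where
  "signed_area N W = (1/2) * (\<Sum>i<N. fst (W i) * snd (W (Suc i mod N))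
                                     - fst (W (Suc i mod N)) * snd (W i))"

end

theory Submission
  imports Defs
begin

text \<open>Only the tangency of the sides to a caustic strictly inside \<open>E\<close> matters. In the
  eccentric anomaly \<open>t \<mapsto> (a cos t, b sin t)\<close> the vertices lift to an increasing sequence of
  angles with steps in \<open>(0, pi)\<close> which, by convexity, gains exactly \<open>2 * pi\<close> per period. The
  reflected polygon \<open>-P\<close> has its sides tangent to the same caustic, and two oriented tangent
  chords of the caustic cannot be nested; so unless \<open>-P 0\<close> is a vertex, the lifts of \<open>P\<close> and
  \<open>-P\<close> interleave all the way round, which forces \<open>N\<close> to be odd. Hence for even \<open>N\<close> there
  is a \<open>k\<close> with \<open>P (i + k) = - P i\<close>. As \<open>focus2 = - focus1\<close>, the feet from \<open>focus2\<close> are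
  then the negatives of the feet from \<open>focus1\<close>, cyclically shifted by \<open>k\<close>, and both operations
  preserve the signed area.\<close>

section \<open>Lines meeting an ellipse\<close>

definition ellipse_quad :: "real \<Rightarrow> real \<Rightarrow> pt \<Rightarrow> real" where
  "ellipse_quad A B X = (fst X)\<^sup>2 / A\<^sup>2 + (snd X)\<^sup>2 / B\<^sup>2"

lemma on_ellipse_iff_quad: "on_ellipse A B X \<longleftrightarrow> ellipse_quad A B X = 1"
  by (simp add: on_ellipse_def ellipse_quad_def)

lemma ellipse_quad_line:
  "ellipse_quad A B (W + r *\<^sub>R d) = ellipse_quad A B W
     + 2 * r * (fst W * fst d / A\<^sup>2 + snd W * snd d / B\<^sup>2) + r\<^sup>2 * ellipse_quad A B d"
  by (simp add: ellipse_quad_def power2_eq_square divide_inverse algebra_simps)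

lemma ellipse_quad_pos:
  assumes "A \<noteq> 0" "B \<noteq> 0" "d \<noteq> 0"
  shows "ellipse_quad A B d > 0"
proof -
  have "fst d \<noteq> 0 \<or> snd d \<noteq> 0"
    using assms(3) by (simp add: prod_eq_iff)
  then show ?thesis
    using assms(1,2) unfolding ellipse_quad_def by (auto intro: add_pos_nonneg add_nonneg_pos)
qed

lemma ellipse_quad_chord:
  assumes "on_ellipse A B X" "on_ellipse A B Y"
  shows "ellipse_quad A B (X + t *\<^sub>R (Y - X)) = 1 + t * (t - 1) * ellipse_quad A B (Y - X)"
proof -
  define \<alpha> \<beta> where "\<alpha> = ellipse_quad A B (Y - X)"
    and "\<beta> = fst X * fst (Y - X) / A\<^sup>2 + snd X * snd (Y - X) / B\<^sup>2"
  have "ellipse_quad A B (X + 1 *\<^sub>R (Y - X)) = 1"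
    using assms(2) by (simp add: on_ellipse_iff_quad)
  then have chord_end: "2 * \<beta> = - \<alpha>"
    using assms(1) unfolding ellipse_quad_line on_ellipse_iff_quad \<alpha>_def \<beta>_def by simp
  have "ellipse_quad A B (X + t *\<^sub>R (Y - X)) = 1 + t * (2 * \<beta>) + t\<^sup>2 * \<alpha>"
    using assms(1) by (simp add: ellipse_quad_line on_ellipse_iff_quad \<alpha>_def \<beta>_def)
  also have "\<dots> = 1 + t * (t - 1) * \<alpha>"
    unfolding chord_end by (simp add: algebra_simps power2_eq_square)
  finally show ?thesis
    by (simp add: \<alpha>_def)
qed

lemma line_tangent_to_ellipse_eq:
  assumes "line_tangent_to_ellipse P Q A B" "P \<noteq> Q"
    and "on_ellipse A B (P + s *\<^sub>R (Q - P))" "on_ellipse A B (P + t *\<^sub>R (Q - P))"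
  shows "s = t"
proof -
  have "P + s *\<^sub>R (Q - P) = P + t *\<^sub>R (Q - P)"
    using assms(1,3,4) unfolding line_tangent_to_ellipse_def by blast
  then show ?thesis
    using assms(2) by simp
qed

lemma line_through_interior_not_tangent:
  assumes "P \<noteq> Q" "A \<noteq> 0" "B \<noteq> 0" "ellipse_quad A B W < 1" "W = P + w *\<^sub>R (Q - P)"
  shows "\<not> line_tangent_to_ellipse P Q A B"
proof
  assume tangent: "line_tangent_to_ellipse P Q A B"
  define d where "d = Q - P"
  define \<alpha> \<beta> \<gamma> where "\<alpha> = ellipse_quad A B d"
    and "\<beta> = fst W * fst d / A\<^sup>2 + snd W * snd d / B\<^sup>2" and "\<gamma> = ellipse_quad A B W"
  have "\<alpha> > 0"
    using assms(1-3) by (simp add: \<alpha>_def d_def ellipse_quad_pos)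
  define S where "S = sqrt (\<beta>\<^sup>2 + \<alpha> * (1 - \<gamma>))"
  have "\<beta>\<^sup>2 + \<alpha> * (1 - \<gamma>) > 0"
    using \<open>\<alpha> > 0\<close> assms(4) by (simp add: \<gamma>_def add_nonneg_pos)
  then have "S > 0" and S2: "S\<^sup>2 = \<beta>\<^sup>2 + \<alpha> * (1 - \<gamma>)"
    by (simp_all add: S_def)
  have on_root: "on_ellipse A B (P + (w + (\<sigma> - \<beta>) / \<alpha>) *\<^sub>R (Q - P))"
    if "\<sigma>\<^sup>2 = S\<^sup>2" for \<sigma>
  proof -
    have "P + (w + (\<sigma> - \<beta>) / \<alpha>) *\<^sub>R (Q - P) = W + ((\<sigma> - \<beta>) / \<alpha>) *\<^sub>R d"
      by (simp add: assms(5) d_def scaleR_add_left)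
    moreover have "\<gamma> + 2 * ((\<sigma> - \<beta>) / \<alpha>) * \<beta> + ((\<sigma> - \<beta>) / \<alpha>)\<^sup>2 * \<alpha> = 1"
      using \<open>\<alpha> > 0\<close> that S2 by (simp add: field_simps power2_eq_square) algebra
    then have "on_ellipse A B (W + ((\<sigma> - \<beta>) / \<alpha>) *\<^sub>R d)"
      unfolding on_ellipse_iff_quad ellipse_quad_line \<alpha>_def[symmetric] \<beta>_def[symmetric]
        \<gamma>_def[symmetric] .
    ultimately show ?thesis
      by simp
  qed
  have "(- S)\<^sup>2 = S\<^sup>2"
    by simp
  from line_tangent_to_ellipse_eq[OF tangent assms(1) on_root[OF refl] on_root[OF this]]
  have "(S - \<beta>) / \<alpha> = (- S - \<beta>) / \<alpha>"
    by simp
  then show False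
    using \<open>S > 0\<close> \<open>\<alpha> > 0\<close> by (simp add: field_simps)
qed

lemma cross_eq_0_imp_scaled:
  assumes "cross d v = 0" "d \<noteq> 0"
  obtains r where "v = r *\<^sub>R d"
proof (cases "fst d = 0")
  case True
  then show ?thesis
    using assms that[of "snd v / snd d"] by (auto simp: cross_def prod_eq_iff field_simps)
next
  case False
  then show ?thesis
    using assms that[of "fst v / fst d"] by (auto simp: cross_def prod_eq_iff field_simps)
qed

lemma on_ellipse_collinear_chord:
  assumes "a \<noteq> 0" "b \<noteq> 0" "on_ellipse a b X" "on_ellipse a b Y" "X \<noteq> Y"
    and "on_ellipse a b Z" "cross (Y - X) (Z - X) = 0"
  shows "Z = X \<or> Z = Y"
proof -
  obtain r where "Z - X = r *\<^sub>R (Y - X)"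
    using cross_eq_0_imp_scaled assms(5,7) by (metis right_minus_eq)
  then have Z: "Z = X + r *\<^sub>R (Y - X)"
    by (simp add: algebra_simps)
  have "r * (r - 1) * ellipse_quad a b (Y - X) = 0"
    using ellipse_quad_chord[OF assms(3,4), of r] assms(6) by (simp add: Z on_ellipse_iff_quad)
  moreover have "ellipse_quad a b (Y - X) > 0"
    using assms(1,2,5) by (simp add: ellipse_quad_pos)
  ultimately have "r = 0 \<or> r = 1"
    by simp
  then show ?thesis
    using Z by auto
qed

lemma inner_ellipse_inside:
  assumes "0 < A" "A < a" "0 < B" "B < b" "on_ellipse A B Z"
  shows "ellipse_quad a b Z < 1"
proof -
  have "fst Z \<noteq> 0 \<or> snd Z \<noteq> 0"
    using assms(5) by (auto simp: on_ellipse_def)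
  moreover have "(fst Z)\<^sup>2 / a\<^sup>2 \<le> (fst Z)\<^sup>2 / A\<^sup>2" "(snd Z)\<^sup>2 / b\<^sup>2 \<le> (snd Z)\<^sup>2 / B\<^sup>2"
    using assms by (auto intro!: divide_left_mono power_strict_mono)
  moreover have "fst Z \<noteq> 0 \<Longrightarrow> (fst Z)\<^sup>2 / a\<^sup>2 < (fst Z)\<^sup>2 / A\<^sup>2"
    "snd Z \<noteq> 0 \<Longrightarrow> (snd Z)\<^sup>2 / b\<^sup>2 < (snd Z)\<^sup>2 / B\<^sup>2"
    using assms by (auto intro!: divide_strict_left_mono power_strict_mono)
  ultimately have "ellipse_quad a b Z < ellipse_quad A B Z"
    unfolding ellipse_quad_def by linarith
  then show ?thesis
    using assms(5) by (simp add: on_ellipse_iff_quad)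
qed

section \<open>Chords of the ellipse tangent to an inner caustic\<close>

definition caustic_chord :: "real \<Rightarrow> real \<Rightarrow> real \<Rightarrow> real \<Rightarrow> pt \<Rightarrow> pt \<Rightarrow> bool" where
  "caustic_chord a b A B X Y \<longleftrightarrow> on_ellipse a b X \<and> on_ellipse a b Y \<and> X \<noteq> Y \<and>
     line_tangent_to_ellipse X Y A B \<and> cross (Y - X) (0 - X) > 0"

lemma line_tangent_to_ellipse_neg:
  assumes "line_tangent_to_ellipse X Y A B"
  shows "line_tangent_to_ellipse (- X) (- Y) A B"
proof -
  have on_neg: "on_ellipse A B (- Z) \<longleftrightarrow> on_ellipse A B Z" for Z
    by (simp add: on_ellipse_def)
  have line_neg: "Z = - X + t *\<^sub>R (- Y - - X) \<longleftrightarrow> - Z = X + t *\<^sub>R (Y - X)" for Z t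
    by (auto simp: algebra_simps)
  show ?thesis
    using assms unfolding line_tangent_to_ellipse_def line_neg
    by (metis on_neg minus_minus)
qed

lemma caustic_chord_neg: "caustic_chord a b A B X Y \<Longrightarrow> caustic_chord a b A B (- X) (- Y)"
  unfolding caustic_chord_def
  by (auto simp: line_tangent_to_ellipse_neg on_ellipse_def cross_def algebra_simps)

text \<open>If \<open>Z\<close> were strictly to the right of the chord, the segment from the origin (strictly to
  its left) to \<open>Z\<close> would cross the chord's line strictly inside the caustic.\<close>

lemma caustic_chord_left:
  assumes chord: "caustic_chord a b A B X Y" and "A > 0" "B > 0" "on_ellipse A B Z"
  shows "cross (Y - X) (Z - X) \<ge> 0"
proof (rule ccontr)
  assume right: "\<not> ?thesis"
  define d where "d = Y - X"
  have "d \<noteq> 0" and "X \<noteq> Y"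
    using chord by (auto simp: caustic_chord_def d_def)
  have cX: "cross d X < 0" and cZ: "cross d Z < cross d X"
    using chord right unfolding caustic_chord_def d_def by (simp_all add: cross_def algebra_simps)
  define l where "l = cross d X / cross d Z"
  have "0 < l" "l < 1"
    using cX cZ by (simp_all add: l_def divide_neg_neg divide_less_eq)
  have "cross d (l *\<^sub>R Z - X) = l * cross d Z - cross d X"
    by (simp add: cross_def algebra_simps)
  also have "\<dots> = 0"
    using cZ cX by (simp add: l_def)
  finally obtain r where r: "l *\<^sub>R Z - X = r *\<^sub>R d"
    using cross_eq_0_imp_scaled \<open>d \<noteq> 0\<close> by blast
  have "ellipse_quad A B (l *\<^sub>R Z) = l\<^sup>2 * ellipse_quad A B Z"
    by (simp add: ellipse_quad_def algebra_simps)
  also have "\<dots> = l\<^sup>2"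
    using assms(4) by (simp add: on_ellipse_iff_quad)
  also have "\<dots> < 1"
    using \<open>0 < l\<close> \<open>l < 1\<close> by (simp add: power_less_one_iff)
  finally have "\<not> line_tangent_to_ellipse X Y A B"
    using line_through_interior_not_tangent[OF \<open>X \<noteq> Y\<close>] assms(2,3) r
    by (metis d_def diff_add_cancel add.commute less_irrefl)
  then show False
    using chord by (simp add: caustic_chord_def)
qed

text \<open>The second chord's point of tangency lies strictly between its endpoints, hence it would
  lie strictly to the right of the first chord.\<close>

lemma caustic_chords_not_nested:
  assumes inner: "0 < A" "A < a" "0 < B" "B < b"
    and chord: "caustic_chord a b A B X Y" and chord': "caustic_chord a b A B X' Y'"
    and right: "cross (Y - X) (X' - X) \<le> 0" "cross (Y - X) (Y' - X) \<le> 0"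
  shows "X' = X \<and> Y' = Y"
proof -
  have "a \<noteq> 0" "b \<noteq> 0"
    using inner by auto
  have E: "on_ellipse a b X" "on_ellipse a b Y" "X \<noteq> Y"
    and E': "on_ellipse a b X'" "on_ellipse a b Y'" "X' \<noteq> Y'"
    using chord chord' by (auto simp: caustic_chord_def)
  obtain T t where T: "on_ellipse A B T" "T = X' + t *\<^sub>R (Y' - X')"
    using chord' unfolding caustic_chord_def line_tangent_to_ellipse_def by blast
  have "1 + t * (t - 1) * ellipse_quad a b (Y' - X') < 1"
    using inner_ellipse_inside[OF inner T(1)] ellipse_quad_chord[OF E'(1,2)] T(2) by simp
  moreover have "ellipse_quad a b (Y' - X') > 0"
    using \<open>a \<noteq> 0\<close> \<open>b \<noteq> 0\<close> E'(3) by (simp add: ellipse_quad_pos)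
  ultimately have "t * (t - 1) < 0"
    by (simp add: mult_less_0_iff)
  then have t: "0 < t" "t < 1"
    by (auto simp: mult_less_0_iff)
  have "cross (Y - X) (T - X) = (1 - t) * cross (Y - X) (X' - X) + t * cross (Y - X) (Y' - X)"
    by (simp add: T(2) cross_def algebra_simps)
  moreover have "cross (Y - X) (T - X) \<ge> 0"
    using caustic_chord_left[OF chord inner(1,3) T(1)] .
  moreover have "(1 - t) * cross (Y - X) (X' - X) \<le> 0" "t * cross (Y - X) (Y' - X) \<le> 0"
    using t right by (simp_all add: mult_nonneg_nonpos)
  ultimately have "(1 - t) * cross (Y - X) (X' - X) = 0" "t * cross (Y - X) (Y' - X) = 0"
    by linarith+
  then have "cross (Y - X) (X' - X) = 0" "cross (Y - X) (Y' - X) = 0"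
    using t by simp_all
  then have "X' = X \<or> X' = Y" "Y' = X \<or> Y' = Y"
    using on_ellipse_collinear_chord[OF \<open>a \<noteq> 0\<close> \<open>b \<noteq> 0\<close> E] E' by auto
  moreover have "\<not> (X' = Y \<and> Y' = X)"
    using chord chord' by (auto simp: caustic_chord_def cross_def algebra_simps)
  ultimately show ?thesis
    using E'(3) by auto
qed

lemma caustic_chord_unique_end:
  assumes "0 < A" "A < a" "0 < B" "B < b"
    and "caustic_chord a b A B X Y" "caustic_chord a b A B X Y'"
  shows "Y' = Y"
proof (cases "cross (Y - X) (Y' - X) \<le> 0")
  case True
  then show ?thesis
    using caustic_chords_not_nested[OF assms] by (simp add: cross_def)
next
  case False
  then have "cross (Y' - X) (Y - X) \<le> 0"
    by (simp add: cross_def algebra_simps)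
  then show ?thesis
    using caustic_chords_not_nested[OF assms(1-4,6,5)] by (simp add: cross_def)
qed

lemma confocal_tangent_caustic_inside:
  assumes "a > 0" "b > 0" and confocal: "confocal_ellipse a b A B"
    and XY: "on_ellipse a b X" "on_ellipse a b Y" "X \<noteq> Y"
    and tangent: "line_tangent_to_ellipse X Y A B"
  shows "A < a" "B < b"
proof -
  have AB: "0 < A" "0 < B" "A\<^sup>2 - B\<^sup>2 = a\<^sup>2 - b\<^sup>2"
    using confocal by (auto simp: confocal_ellipse_def)
  have iff: "A < a \<longleftrightarrow> B < b" "A = a \<longleftrightarrow> B = b"
  proof -
    have sq: "x < y \<longleftrightarrow> x\<^sup>2 < y\<^sup>2" "x = y \<longleftrightarrow> x\<^sup>2 = y\<^sup>2" if "0 < x" "0 < y" for x y :: real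
      using that by (auto intro: power_strict_mono dest: power_less_imp_less_base)
    show "A < a \<longleftrightarrow> B < b" "A = a \<longleftrightarrow> B = b"
      unfolding sq[OF AB(1) assms(1)] sq[OF AB(2) assms(2)] using AB(3) by auto
  qed
  consider "A < a" | "A = a" | "a < A"
    by linarith
  then have "A < a"
  proof cases
    case 2
    then have "on_ellipse A B (X + 0 *\<^sub>R (Y - X))" "on_ellipse A B (X + 1 *\<^sub>R (Y - X))"
      using XY iff(2) by simp_all
    then have "(0::real) = 1"
      by (rule line_tangent_to_ellipse_eq[OF tangent XY(3)])
    then show ?thesis
      by simp
  next
    case 3
    then have "ellipse_quad A B X < 1"
      using inner_ellipse_inside[OF assms(1) _ assms(2) _ XY(1)] iff by simp
    then show ?thesis
      using line_through_interior_not_tangent[OF XY(3), of A B X 0] AB tangent by simp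
  qed
  with iff show "A < a" "B < b"
    by simp_all
qed

section \<open>Eccentric anomaly\<close>

definition ell_point :: "real \<Rightarrow> real \<Rightarrow> real \<Rightarrow> pt" where
  "ell_point a b t = (a * cos t, b * sin t)"

lemma ell_point_add_pi: "ell_point a b (t + pi) = - ell_point a b t"
  by (simp add: ell_point_def)

lemma ell_point_add_2pi: "ell_point a b (t + 2 * pi) = ell_point a b t"
  by (simp add: ell_point_def)

lemma ell_point_exists:
  assumes "a > 0" "b > 0" "on_ellipse a b X"
  obtains t where "0 \<le> t" "t < 2 * pi" "X = ell_point a b t"
proof -
  have "(fst X / a)\<^sup>2 + (snd X / b)\<^sup>2 = 1"
    using assms(3) by (simp add: on_ellipse_def power_divide)
  then obtain t where "0 \<le> t" "t < 2 * pi" "fst X / a = cos t" "snd X / b = sin t"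
    by (rule sincos_total_2pi)
  with assms(1,2) show ?thesis
    using that by (simp add: ell_point_def prod_eq_iff field_simps)
qed

lemma ell_point_eq_imp_2pi_multiple:
  assumes "a \<noteq> 0" "b \<noteq> 0" "ell_point a b s = ell_point a b t"
  obtains n :: int where "s = t + of_int n * (2 * pi)"
proof -
  have "cos s = cos t" "sin s = sin t"
    using assms by (auto simp: ell_point_def)
  then have "cos (s - t) = 1"
    by (simp add: cos_diff)
  then obtain n :: int where "s - t = of_int n * 2 * pi"
    using cos_one_2pi_int by blast
  then show ?thesis
    using that[of n] by (simp add: algebra_simps)
qed

lemma ell_point_inj:
  assumes "a \<noteq> 0" "b \<noteq> 0" "s \<le> u" "u < s + 2 * pi" "ell_point a b u = ell_point a b s"
  shows "u = s"
proof -
  obtain n :: int where n: "u = s + of_int n * (2 * pi)"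
    using ell_point_eq_imp_2pi_multiple[OF assms(1,2,5)] .
  then have "0 \<le> of_int n * (2 * pi)" "of_int n * (2 * pi) < 1 * (2 * pi)"
    using assms(3,4) by simp_all
  then have "0 \<le> n" "n < 1"
    using pi_gt_zero by (simp_all add: zero_le_mult_iff mult_less_cancel_right)
  then show ?thesis
    using n by simp
qed

lemma ell_point_shift:
  assumes "a \<noteq> 0" "b \<noteq> 0" "ell_point a b s = ell_point a b t"
  shows "ell_point a b (s + d) = ell_point a b (t + d)"
proof -
  have "cos s = cos t" "sin s = sin t"
    using assms by (auto simp: ell_point_def)
  then show ?thesis
    by (simp add: ell_point_def cos_add sin_add)
qed

lemma sin_double_sum:
  fixes x y :: real
  shows "sin (2 * x) + sin (2 * y) - sin (2 * x + 2 * y) = 4 * sin x * sin y * sin (x + y)"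
  unfolding sin_add[of "2 * x"] sin_add[of x] sin_double cos_double_sin
  by (simp add: algebra_simps power2_eq_square)

lemma cross_ell_point:
  "cross (ell_point a b s - ell_point a b t) (ell_point a b u - ell_point a b t)
     = - 4 * a * b * sin ((s - t) / 2) * sin ((s - u) / 2) * sin ((u - t) / 2)"
proof -
  define x y where "x = (u - t) / 2" and "y = (s - u) / 2"
  have angles: "s - t = 2 * x + 2 * y" "s - u = 2 * y" "u - t = 2 * x"
    by (simp_all add: x_def y_def field_simps)
  have "cross (ell_point a b s - ell_point a b t) (ell_point a b u - ell_point a b t)
      = a * b * (sin (s - t) - sin (s - u) - sin (u - t))"
    by (simp add: ell_point_def cross_def sin_diff algebra_simps)
  also have "\<dots> = - 4 * a * b * sin (x + y) * sin y * sin x"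
    unfolding angles using sin_double_sum[of x y] by (simp add: algebra_simps)
  also have "x + y = (s - t) / 2"
    by (simp add: x_def y_def field_simps)
  finally show ?thesis
    by (simp add: x_def y_def)
qed

lemma cross_ell_point_nonpos:
  assumes "a > 0" "b > 0" "t \<le> u" "u \<le> s" "s < t + 2 * pi"
  shows "cross (ell_point a b s - ell_point a b t) (ell_point a b u - ell_point a b t) \<le> 0"
proof -
  have "0 \<le> sin ((s - t) / 2) * sin ((s - u) / 2) * sin ((u - t) / 2)"
    using assms(3-5) by (intro mult_nonneg_nonneg sin_ge_zero) auto
  then show ?thesis
    using assms(1,2) unfolding cross_ell_point by simp
qed

lemma cross_ell_point_neg:
  assumes "a > 0" "b > 0" "t < u" "u < s" "s < t + 2 * pi"
  shows "cross (ell_point a b s - ell_point a b t) (ell_point a b u - ell_point a b t) < 0"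
proof -
  have "0 < sin ((s - t) / 2) * sin ((s - u) / 2) * sin ((u - t) / 2)"
    using assms(3-5) by (intro mult_pos_pos sin_gt_zero) auto
  then show ?thesis
    using assms(1,2) unfolding cross_ell_point by simp
qed

lemma ell_point_step:
  assumes "a > 0" "b > 0" "on_ellipse a b X" "on_ellipse a b Y" "cross (Y - X) (0 - X) > 0"
  shows "\<exists>d. 0 < d \<and> d < pi \<and> (\<forall>t. ell_point a b t = X \<longrightarrow> ell_point a b (t + d) = Y)"
proof -
  obtain s where s: "0 \<le> s" "s < 2 * pi" "X = ell_point a b s"
    using ell_point_exists[OF assms(1,2,3)] .
  obtain s' where s': "0 \<le> s'" "s' < 2 * pi" "Y = ell_point a b s'"
    using ell_point_exists[OF assms(1,2,4)] .
  define d where "d = (if s \<le> s' then s' - s else s' - s + 2 * pi)"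
  have "0 \<le> d" "d < 2 * pi"
    using s s' by (auto simp: d_def)
  have "a * b * sin d = a * b * sin (s' - s)"
    by (simp add: d_def)
  also have "\<dots> = cross (Y - X) (0 - X)"
    by (simp add: s s' ell_point_def cross_def sin_diff algebra_simps)
  finally have "0 < a * b * sin d"
    using assms(5) by simp
  then have "sin d > 0"
    using assms(1,2) by (meson mult_pos_pos zero_less_mult_pos)
  then have "d \<noteq> 0" "\<not> pi \<le> d"
    using \<open>d < 2 * pi\<close> sin_le_zero[of d] by auto
  then have "0 < d" "d < pi"
    using \<open>0 \<le> d\<close> by linarith+
  moreover have "ell_point a b (s + d) = Y"
    by (simp add: d_def s' ell_point_def)
  then have "ell_point a b (t + d) = Y" if "ell_point a b t = X" for t
    using ell_point_shift[of a b t s d] assms(1,2) that s(3) by simp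
  ultimately show ?thesis
    by blast
qed

section \<open>Central symmetry of periodic trajectories with an even number of vertices\<close>

lemma ell_angle_lift:
  assumes "a > 0" "b > 0"
    and on: "\<And>i. on_ellipse a b (P (i mod N))"
    and left: "\<And>i. cross (P (Suc i mod N) - P (i mod N)) (0 - P (i mod N)) > 0"
  obtains \<tau> where "\<And>i. ell_point a b (\<tau> i) = P (i mod N)"
    "\<And>i. \<tau> i < \<tau> (Suc i)" "\<And>i. \<tau> (Suc i) < \<tau> i + pi"
    "\<And>i. \<tau> (i + N) = \<tau> i + (\<tau> N - \<tau> 0)"
proof -
  have "\<forall>j. \<exists>d. 0 < d \<and> d < pi \<and>
      (\<forall>t. ell_point a b t = P (j mod N) \<longrightarrow> ell_point a b (t + d) = P (Suc j mod N))"
    using ell_point_step[OF assms(1,2) on on left] by blast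
  from choice[OF this] obtain d where d: "\<And>j. 0 < d j \<and> d j < pi \<and>
      (\<forall>t. ell_point a b t = P (j mod N) \<longrightarrow> ell_point a b (t + d j) = P (Suc j mod N))"
    by blast
  define \<delta> where "\<delta> i = d (i mod N)" for i
  have \<delta>: "0 < \<delta> i" "\<delta> i < pi"
    "ell_point a b t = P (i mod N) \<Longrightarrow> ell_point a b (t + \<delta> i) = P (Suc i mod N)" for i t
    using d[of "i mod N"] by (simp_all add: \<delta>_def mod_Suc_eq)
  obtain t0 where t0: "P 0 = ell_point a b t0"
    using ell_point_exists[OF assms(1,2)] on[of 0] by (metis mod_0)
  define \<tau> where "\<tau> i = t0 + (\<Sum>j<i. \<delta> j)" for i
  have \<tau>_Suc: "\<tau> (Suc i) = \<tau> i + \<delta> i" for i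
    by (simp add: \<tau>_def)
  show ?thesis
  proof (rule that)
    show "ell_point a b (\<tau> i) = P (i mod N)" for i
      by (induction i) (simp_all add: \<tau>_def[of 0] t0 \<tau>_Suc \<delta>(3))
    show "\<tau> i < \<tau> (Suc i)" "\<tau> (Suc i) < \<tau> i + pi" for i
      using \<delta>(1,2)[of i] by (simp_all add: \<tau>_Suc)
    show "\<tau> (i + N) = \<tau> i + (\<tau> N - \<tau> 0)" for i
    proof (induction i)
      case (Suc i)
      have "\<delta> (i + N) = \<delta> i"
        by (simp add: \<delta>_def)
      with Suc.IH show ?case
        by (simp add: \<tau>_Suc)
    qed simp
  qed
qed

lemma seq_crossing_index:
  fixes \<tau> :: "nat \<Rightarrow> 'a::linorder"
  assumes "m \<le> n" "\<tau> m \<le> x" "x < \<tau> n"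
  shows "\<exists>k. m \<le> k \<and> k < n \<and> \<tau> k \<le> x \<and> x < \<tau> (Suc k)"
  using assms
proof (induction n)
  case (Suc n)
  then show ?case
    by (cases "x < \<tau> n") (auto simp: le_Suc_eq intro: less_SucI)
qed simp

lemma convex_lift_total_angle:
  assumes "a > 0" "b > 0" "N \<ge> 3"
    and lift: "\<And>i. ell_point a b (\<tau> i) = P (i mod N)"
    and mono: "\<And>i. \<tau> i < \<tau> (Suc i)" and step: "\<And>i. \<tau> (Suc i) < \<tau> i + pi"
    and distinct: "\<And>i j. i < N \<Longrightarrow> j < N \<Longrightarrow> P i = P j \<Longrightarrow> i = j"
    and convex: "\<And>i j. i < N \<Longrightarrow> j < N \<Longrightarrow> j \<noteq> i \<Longrightarrow> j \<noteq> Suc i mod N \<Longrightarrow>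
        cross (P (Suc i mod N) - P i) (P j - P i) > 0"
  shows "\<tau> N = \<tau> 0 + 2 * pi"
proof -
  \<comment> \<open>Past \<open>\<tau> 1 + 2 * pi\<close>, which again represents \<open>P 1\<close>, the vertex \<open>P 1\<close> would lie on or
    strictly to the right of some edge.\<close>
  have "\<tau> N \<le> \<tau> 1 + 2 * pi"
  proof (rule ccontr)
    assume "\<not> ?thesis"
    then obtain k where k: "1 \<le> k" "k < N" "\<tau> k \<le> \<tau> 1 + 2 * pi" "\<tau> 1 + 2 * pi < \<tau> (Suc k)"
      using seq_crossing_index[of 1 N \<tau> "\<tau> 1 + 2 * pi"] \<open>N \<ge> 3\<close> by auto
    have P1: "ell_point a b (\<tau> 1 + 2 * pi) = P 1"
      using lift[of 1] \<open>N \<ge> 3\<close> by (simp add: ell_point_add_2pi)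
    have "k \<noteq> 1"
    proof
      assume "k = 1"
      then have "\<tau> 1 + 2 * pi < \<tau> (Suc 1)"
        using k(4) by simp
      with step[of 1] pi_gt_zero show False
        by linarith
    qed
    moreover have "\<tau> k \<noteq> \<tau> 1 + 2 * pi"
    proof
      assume "\<tau> k = \<tau> 1 + 2 * pi"
      then have "P k = P 1"
        using lift[of k] k(2) P1 by simp
      then show False
        using distinct[of k 1] k(2) \<open>N \<ge> 3\<close> \<open>k \<noteq> 1\<close> by simp
    qed
    ultimately have "\<tau> k < \<tau> 1 + 2 * pi"
      using k(3) by simp
    then have "cross (P (Suc k mod N) - P k) (P 1 - P k) < 0"
      using cross_ell_point_neg[OF assms(1,2), of "\<tau> k" "\<tau> 1 + 2 * pi" "\<tau> (Suc k)"]
        k(2,4) step[of k] pi_gt_zero lift[of k] lift[of "Suc k"] P1 by simp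
    moreover have "1 \<noteq> Suc k mod N"
      using k(1,2) \<open>N \<ge> 3\<close> by (cases "Suc k = N") auto
    ultimately show False
      using convex[of k 1] k(2) \<open>k \<noteq> 1\<close> \<open>N \<ge> 3\<close> by auto
  qed
  moreover obtain n :: int where n: "\<tau> N = \<tau> 0 + of_int n * (2 * pi)"
    using ell_point_eq_imp_2pi_multiple[of a b "\<tau> N" "\<tau> 0"] lift[of N] lift[of 0] assms(1,2) by auto
  moreover have "\<tau> 0 < \<tau> N"
    using lift_Suc_mono_less[of \<tau>, OF mono] \<open>N \<ge> 3\<close> by simp
  moreover have "\<tau> 1 < \<tau> 0 + pi"
    using step[of 0] by simp
  ultimately have "0 * (2 * pi) < of_int n * (2 * pi)" "of_int n * (2 * pi) < 2 * (2 * pi)"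
    using pi_gt_zero by linarith+
  then have "0 < n" "n < 2"
    using pi_gt_zero by (simp_all only: mult_less_cancel_right) simp_all
  then have "n = 1"
    by simp
  then show ?thesis
    using n by simp
qed

text \<open>If \<open>\<tau> 0 + pi\<close> were not a lifted vertex, non-nesting would force the rotated lift to
  interleave with the original one, \<open>\<tau> (k + j) < \<tau> j + pi < \<tau> (k + j + 1)\<close> for all \<open>j\<close>;
  at \<open>j = k\<close> and \<open>j = k + 1\<close> this places \<open>\<tau> N = \<tau> 0 + 2 * pi\<close> strictly between
  \<open>\<tau> (2 * k)\<close> and \<open>\<tau> (2 * k + 2)\<close>, so \<open>N = 2 * k + 1\<close>.\<close>

lemma lift_half_turn_vertex:
  fixes \<tau> :: "nat \<Rightarrow> real" and V :: "real \<Rightarrow> real \<Rightarrow> bool"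
  assumes mono: "\<And>i. \<tau> i < \<tau> (Suc i)" and step: "\<And>i. \<tau> (Suc i) < \<tau> i + pi"
    and period: "\<And>i. \<tau> (i + N) = \<tau> i + 2 * pi" and "even N"
    and not_nested: "\<And>s s' u u'. s \<le> u \<Longrightarrow> u < u' \<Longrightarrow> u' \<le> s' \<Longrightarrow> s' < s + 2 * pi \<Longrightarrow>
        V s s' \<Longrightarrow> V u u' \<Longrightarrow> u = s"
    and V: "\<And>i. V (\<tau> i) (\<tau> (Suc i))" and V_pi: "\<And>i. V (\<tau> i + pi) (\<tau> (Suc i) + pi)"
  shows "\<exists>k. \<tau> k = \<tau> 0 + pi"
proof (rule ccontr)
  assume not_vertex: "\<not> ?thesis"
  define \<sigma> where "\<sigma> j = \<tau> j + pi" for j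
  have \<tau>N: "\<tau> N = \<tau> 0 + 2 * pi"
    using period[of 0] by simp
  obtain k where "\<tau> k \<le> \<sigma> 0" "\<sigma> 0 < \<tau> (Suc k)"
    using seq_crossing_index[of 0 N \<tau> "\<sigma> 0"] \<tau>N pi_gt_zero by (auto simp: \<sigma>_def)
  then have k: "\<tau> k < \<sigma> 0" "\<sigma> 0 < \<tau> (Suc k)"
    using not_vertex by (auto simp: \<sigma>_def order_le_less)
  have interleaved: "\<tau> (k + j) < \<sigma> j \<and> \<sigma> j < \<tau> (Suc (k + j))" for j
  proof (induction j)
    case 0
    then show ?case
      using k by simp
  next
    case (Suc j)
    have "\<tau> (Suc (k + j)) < \<sigma> (Suc j)"
    proof (rule ccontr)
      assume "\<not> ?thesis"
      then have "\<sigma> j = \<tau> (k + j)"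
        using not_nested[of "\<tau> (k + j)" "\<sigma> j" "\<sigma> (Suc j)" "\<tau> (Suc (k + j))"]
          Suc.IH mono[of j] step[of "k + j"] V[of "k + j"] V_pi[of j] by (auto simp: \<sigma>_def)
      then show False
        using Suc.IH by simp
    qed
    moreover have "\<sigma> (Suc j) < \<tau> (Suc (Suc (k + j)))"
    proof (rule ccontr)
      assume "\<not> ?thesis"
      then have "\<tau> (Suc (k + j)) = \<sigma> j"
        using not_nested[of "\<sigma> j" "\<tau> (Suc (k + j))" "\<tau> (Suc (Suc (k + j)))" "\<sigma> (Suc j)"]
          Suc.IH mono[of "Suc (k + j)"] step[of j] pi_gt_zero V[of "Suc (k + j)"] V_pi[of j]
        by (auto simp: \<sigma>_def)
      then show False
        using Suc.IH by simp
    qed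
    ultimately show ?case
      by simp
  qed
  have "\<tau> (k + k) < \<tau> N" "\<tau> N < \<tau> (Suc (k + Suc k))"
    using interleaved[of k] interleaved[of "Suc k"] k \<tau>N by (simp_all add: \<sigma>_def)
  then have "k + k < N" "N < Suc (k + Suc k)"
    using lift_Suc_mono_less_iff[of \<tau>, OF mono] by blast+
  then have "N = Suc (k + k)"
    by simp
  with \<open>even N\<close> show False
    by simp
qed

lemma caustic_polygon_centrally_symmetric:
  assumes inner: "0 < A" "A < a" "0 < B" "B < b" and "even N"
    and chord: "\<And>i. caustic_chord a b A B (P (i mod N)) (P (Suc i mod N))"
    and lift: "\<And>i. ell_point a b (\<tau> i) = P (i mod N)"
    and mono: "\<And>i. \<tau> i < \<tau> (Suc i)" and step: "\<And>i. \<tau> (Suc i) < \<tau> i + pi"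
    and period: "\<And>i. \<tau> (i + N) = \<tau> i + 2 * pi"
  obtains k where "\<And>i. P ((i + k) mod N) = - P (i mod N)"
proof -
  have ab: "a > 0" "b > 0"
    using inner by auto
  define V where "V s s' \<longleftrightarrow> caustic_chord a b A B (ell_point a b s) (ell_point a b s')" for s s'
  have "\<exists>k. \<tau> k = \<tau> 0 + pi"
  proof (rule lift_half_turn_vertex[of \<tau> N V, OF mono step period \<open>even N\<close>])
    fix s s' u u'
    assume order: "s \<le> u" "u < u'" "u' \<le> s'" "s' < s + 2 * pi" and "V s s'" "V u u'"
    then have "ell_point a b u = ell_point a b s"
      using caustic_chords_not_nested[OF inner, of "ell_point a b s" "ell_point a b s'"]
        cross_ell_point_nonpos[OF ab, of s u s'] cross_ell_point_nonpos[OF ab, of s u' s']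
      unfolding V_def by simp
    then show "u = s"
      using ell_point_inj[of a b s u] ab order by simp
  next
    show "V (\<tau> i) (\<tau> (Suc i))" for i
      using chord[of i] by (simp add: V_def lift)
    show "V (\<tau> i + pi) (\<tau> (Suc i) + pi)" for i
      using caustic_chord_neg[OF chord[of i]] by (simp add: V_def lift ell_point_add_pi)
  qed
  then obtain k where k: "\<tau> k = \<tau> 0 + pi"
    by blast
  have "P ((i + k) mod N) = - P (i mod N)" for i
  proof (induction i)
    case 0
    show ?case
      using lift[of k] lift[of 0] k by (simp add: ell_point_add_pi)
  next
    case (Suc i)
    have "caustic_chord a b A B (P ((i + k) mod N)) (- P (Suc i mod N))"
      using caustic_chord_neg[OF chord[of i]] Suc.IH by simp
    then show ?case
      using caustic_chord_unique_end[OF inner chord[of "i + k"]] by simp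
  qed
  then show ?thesis
    using that by blast
qed

lemma billiard_traj_caustic_chords:
  assumes "a > b" "b > 0" "billiard_traj a b N P"
  obtains A B where "0 < A" "A < a" "0 < B" "B < b"
    "\<And>i. caustic_chord a b A B (P (i mod N)) (P (Suc i mod N))"
proof -
  note traj = assms(3)[unfolded billiard_traj_def]
  have "N > 0"
    using traj by simp
  obtain A B where confocal: "confocal_ellipse a b A B"
    and tangent: "\<And>i. i < N \<Longrightarrow> line_tangent_to_ellipse (P i) (P (Suc i mod N)) A B"
    using traj by blast
  have "caustic_chord a b A B (P j) (P (Suc j mod N))" if "j < N" for j
    using traj tangent[OF that] that \<open>N > 0\<close> by (simp add: caustic_chord_def)
  then have chord: "caustic_chord a b A B (P (i mod N)) (P (Suc i mod N))" for i
    using \<open>N > 0\<close> by (metis mod_Suc_eq mod_less_divisor)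
  have "a > 0" "b > 0"
    using assms(1,2) by auto
  then have "A < a" "B < b"
    using confocal_tangent_caustic_inside[OF _ _ confocal, of "P 0" "P (Suc 0 mod N)"] chord[of 0]
    unfolding caustic_chord_def by auto
  moreover have "0 < A" "0 < B"
    using confocal by (auto simp: confocal_ellipse_def)
  ultimately show ?thesis
    using chord by (intro that)
qed

lemma billiard_traj_angle_lift:
  assumes "a > b" "b > 0" "billiard_traj a b N P"
  obtains \<tau> where "\<And>i. ell_point a b (\<tau> i) = P (i mod N)"
    "\<And>i. \<tau> i < \<tau> (Suc i)" "\<And>i. \<tau> (Suc i) < \<tau> i + pi" "\<And>i. \<tau> (i + N) = \<tau> i + 2 * pi"
proof -
  note traj = assms(3)[unfolded billiard_traj_def]
  have ab: "a > 0" "b > 0" and "N \<ge> 3"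
    using assms(1,2) traj by auto
  have mod_N: "i mod N < N" "Suc (i mod N) mod N = Suc i mod N" for i
    using \<open>N \<ge> 3\<close> by (simp_all add: mod_Suc_eq)
  have "on_ellipse a b (P (i mod N))" "cross (P (Suc i mod N) - P (i mod N)) (0 - P (i mod N)) > 0"
    for i
    using traj mod_N[of i] by (metis (no_types))+
  then obtain \<tau> where lift: "\<And>i. ell_point a b (\<tau> i) = P (i mod N)"
    and mono: "\<And>i. \<tau> i < \<tau> (Suc i)" and step: "\<And>i. \<tau> (Suc i) < \<tau> i + pi"
    and period: "\<And>i. \<tau> (i + N) = \<tau> i + (\<tau> N - \<tau> 0)"
    using ell_angle_lift[OF ab] by metis
  have convex: "\<And>i j. i < N \<Longrightarrow> j < N \<Longrightarrow> j \<noteq> i \<Longrightarrow> j \<noteq> Suc i mod N \<Longrightarrow>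
      cross (P (Suc i mod N) - P i) (P j - P i) > 0"
    using traj by blast
  have distinct: "i = j" if "i < N" "j < N" "P i = P j" for i j
  proof (rule ccontr)
    assume "i \<noteq> j"
    show False
    proof (cases "j = Suc i mod N")
      case True
      then show False
        using traj that by auto
    next
      case False
      with convex[OF that(1,2) not_sym[OF \<open>i \<noteq> j\<close>]] that(3) show False
        by (simp add: cross_def)
    qed
  qed
  have "\<tau> N = \<tau> 0 + 2 * pi"
    using convex_lift_total_angle[where \<tau> = \<tau> and P = P, OF ab \<open>N \<ge> 3\<close> lift mono step distinct convex] .
  then have "\<tau> (i + N) = \<tau> i + 2 * pi" for i
    using period by simp
  with lift mono step show ?thesis
    by (rule that)
qed

lemma billiard_traj_centrally_symmetric:
  assumes "a > b" "b > 0" "even N" "billiard_traj a b N P"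
  obtains k where "\<And>i. P ((i + k) mod N) = - P (i mod N)"
proof -
  obtain A B where "0 < A" "A < a" "0 < B" "B < b"
    and "\<And>i. caustic_chord a b A B (P (i mod N)) (P (Suc i mod N))"
    using billiard_traj_caustic_chords[OF assms(1,2,4)] by blast
  moreover obtain \<tau> where "\<And>i. ell_point a b (\<tau> i) = P (i mod N)"
    "\<And>i. \<tau> i < \<tau> (Suc i)" "\<And>i. \<tau> (Suc i) < \<tau> i + pi" "\<And>i. \<tau> (i + N) = \<tau> i + 2 * pi"
    using billiard_traj_angle_lift[OF assms(1,2,4)] by blast
  ultimately show ?thesis
    using caustic_polygon_centrally_symmetric[OF _ _ _ _ \<open>even N\<close>] that by blast
qed

section \<open>Signed area\<close>

lemma sum_rotate1_mod:
  fixes g :: "nat \<Rightarrow> 'a::comm_monoid_add"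
  shows "(\<Sum>i<N. g (Suc i mod N)) = (\<Sum>i<N. g i)"
proof (cases N)
  case (Suc m)
  have "(\<Sum>i<Suc m. g (Suc i mod Suc m)) = (\<Sum>i<m. g (Suc i)) + g 0"
    by simp
  also have "\<dots> = (\<Sum>i<Suc m. g i)"
    by (simp only: sum.lessThan_Suc_shift add.commute)
  finally show ?thesis
    using Suc by simp
qed simp

lemma sum_rotate_mod:
  fixes f :: "nat \<Rightarrow> 'a::comm_monoid_add"
  shows "(\<Sum>i<N. f ((i + k) mod N)) = (\<Sum>i<N. f i)"
proof (induction k)
  case (Suc k)
  have "(\<Sum>i<N. f ((i + Suc k) mod N)) = (\<Sum>i<N. f ((Suc i mod N + k) mod N))"
    by (simp add: mod_add_left_eq)
  also have "\<dots> = (\<Sum>i<N. f ((i + k) mod N))"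
    by (rule sum_rotate1_mod)
  finally show ?case
    using Suc.IH by simp
qed simp

lemma signed_area_reflect_rotate:
  assumes "\<And>i. W' ((i + k) mod N) = - W (i mod N)"
  shows "signed_area N W' = signed_area N W"
proof -
  define c where "c V i = fst (V i) * snd (V (Suc i mod N)) - fst (V (Suc i mod N)) * snd (V i)"
    for V :: "nat \<Rightarrow> pt" and i
  have "c W' ((i + k) mod N) = c W i" if "i < N" for i
  proof -
    have "Suc ((i + k) mod N) mod N = (Suc i + k) mod N"
      by (simp add: mod_Suc_eq)
    then show ?thesis
      using assms[of i] assms[of "Suc i"] that by (simp add: c_def)
  qed
  then have "(\<Sum>i<N. c W' ((i + k) mod N)) = (\<Sum>i<N. c W i)"
    by (intro sum.cong) auto
  then have "(\<Sum>i<N. c W' i) = (\<Sum>i<N. c W i)"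
    by (simp only: sum_rotate_mod)
  then show ?thesis
    by (simp add: signed_area_def c_def)
qed

lemma foot_neg: "foot (- F) (- X) (- Y) = - foot F X Y"
  by (simp add: foot_def pdot_def algebra_simps)

theorem mainTheorem2:
  fixes a b :: real and N :: nat and P :: "nat \<Rightarrow> pt"
  assumes "a > b" and "b > 0"
    and "N \<ge> 4" and "even N"
    and "billiard_traj a b N P"
  shows "signed_area N (\<lambda>i. foot (focus1 a b) (P i) (P (Suc i mod N)))
       = signed_area N (\<lambda>i. foot (focus2 a b) (P i) (P (Suc i mod N)))"
proof -
  obtain k where sym: "\<And>i. P ((i + k) mod N) = - P (i mod N)"
    using billiard_traj_centrally_symmetric[OF assms(1,2,4,5)] by blast
  have "focus2 a b = - focus1 a b"
    by (simp add: focus1_def focus2_def)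
  then have "foot (focus2 a b) (P ((i + k) mod N)) (P (Suc ((i + k) mod N) mod N))
      = - foot (focus1 a b) (P (i mod N)) (P (Suc (i mod N) mod N))" for i
    using sym[of i] sym[of "Suc i"] by (simp add: mod_Suc_eq foot_neg)
  then show ?thesis
    by (rule signed_area_reflect_rotate[symmetric])
qed

end
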